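(* Let $G=(V,E)$ be a finite simple graph with nonempty vertex set and burning number $b(G)$. Consider the following procedure (the burning greedy permutation algorithm, BGP), which receives only $G$ as input. Choose $s_1\in V$ arbitrarily and set $k=1$. While $\bigcup_{i=1}^{k}N_{k-i}[s_i]\neq V$, let $s_{k+1}$ be any vertex $u\in V$ maximizing $d(u,\{s_1,\dots,s_k\})$ (ties broken arbitrarily) and increase $k$ by one. Return $(s_1,\dots,s_k)$. Then, for every choice made by this procedure, it terminates and returns a burning sequence of $G$ of length at most $3b(G)-2$; that is, BGP is a $(3-2/b(G))$-approximation algorithm for the graph burning problem.
   Context: For vertices $u,v$ of $G$, $d(u,v)$ is the number of edges on a shortest $u$–$v$ path ($+\infty$ if none exists), and for $S\subseteq V$, $d(u,S)=\min_{w\in S}d(u,w)$. For $v\in V$ and an integer $r\ge 0$, $N_r[v]=\{u\in V: d(u,v)\le r\}$ is the closed $r$-th neighborhood of $v$ (so $N_0[v]=\{v\}$). A burning sequence of length $k$ is a sequence $(s_1,\dots,s_k)$ of vertices of $G$ (repetitions allowed) such that $\bigcup_{i=1}^{k}N_{k-i}[s_i]=V$; equivalently, if in round $i$ vertex $s_i$ becomes burned and every neighbor of a vertex burned in an earlier round becomes burned, then all vertices are burned after round $k$. The burning number $b(G)$ is the minimum length of a burning sequence of $G$. *)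

theory Defs
  imports Main "HOL-Library.Extended_Nat"
begin

definition simple_graph :: "'a set \<Rightarrow> ('a \<Rightarrow> 'a \<Rightarrow> bool) \<Rightarrow> bool" where
  "simple_graph V E \<longleftrightarrow> finite V \<and> (\<forall>u v. E u v \<longrightarrow> u \<in> V \<and> v \<in> V)
     \<and> (\<forall>u v. E u v \<longrightarrow> E v u) \<and> (\<forall>u. \<not> E u u)"

definition is_walk :: "'a set \<Rightarrow> ('a \<Rightarrow> 'a \<Rightarrow> bool) \<Rightarrow> 'a list \<Rightarrow> bool" where
  "is_walk V E p \<longleftrightarrow> p \<noteq> [] \<and> set p \<subseteq> V \<and> (\<forall>i. Suc i < length p \<longrightarrow> E (p ! i) (p ! Suc i))"

definition dist :: "'a set \<Rightarrow> ('a \<Rightarrow> 'a \<Rightarrow> bool) \<Rightarrow> 'a \<Rightarrow> 'a \<Rightarrow> enat" where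
  "dist V E u v = (INF p \<in> {p. is_walk V E p \<and> hd p = u \<and> last p = v}. enat (length p - 1))"

definition dist_set :: "'a set \<Rightarrow> ('a \<Rightarrow> 'a \<Rightarrow> bool) \<Rightarrow> 'a \<Rightarrow> 'a set \<Rightarrow> enat" where
  "dist_set V E u S = (INF w \<in> S. dist V E u w)"

definition nbhd :: "'a set \<Rightarrow> ('a \<Rightarrow> 'a \<Rightarrow> bool) \<Rightarrow> nat \<Rightarrow> 'a \<Rightarrow> 'a set" where
  "nbhd V E r v = {u \<in> V. dist V E u v \<le> enat r}"

text \<open>Union of N_{k-i}[s_i], i = 1..k, for s = [s_1,...,s_k] (0-based list: s!i has radius k-1-i).\<close>
definition burned :: "'a set \<Rightarrow> ('a \<Rightarrow> 'a \<Rightarrow> bool) \<Rightarrow> 'a list \<Rightarrow> 'a set" where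
  "burned V E s = (\<Union>i<length s. nbhd V E (length s - 1 - i) (s ! i))"

definition burning_seq :: "'a set \<Rightarrow> ('a \<Rightarrow> 'a \<Rightarrow> bool) \<Rightarrow> 'a list \<Rightarrow> bool" where
  "burning_seq V E s \<longleftrightarrow> set s \<subseteq> V \<and> burned V E s = V"

definition burning_number :: "'a set \<Rightarrow> ('a \<Rightarrow> 'a \<Rightarrow> bool) \<Rightarrow> nat" where
  "burning_number V E = (LEAST k. \<exists>s. length s = k \<and> burning_seq V E s)"

text \<open>A (possibly unfinished) run of BGP: s_1 in V arbitrary; each further vertex
  s_{j+1} is chosen only while the loop condition holds for (s_1..s_j), and it
  maximizes d(u,{s_1..s_j}) over u in V.\<close>
definition bgp_run :: "'a set \<Rightarrow> ('a \<Rightarrow> 'a \<Rightarrow> bool) \<Rightarrow> 'a list \<Rightarrow> bool" where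
  "bgp_run V E s \<longleftrightarrow> s \<noteq> [] \<and> set s \<subseteq> V \<and>
     (\<forall>j. 1 \<le> j \<and> j < length s \<longrightarrow>
        burned V E (take j s) \<noteq> V \<and>
        (\<forall>u\<in>V. dist_set V E u (set (take j s)) \<le> dist_set V E (s ! j) (set (take j s))))"

definition bgp_output :: "'a set \<Rightarrow> ('a \<Rightarrow> 'a \<Rightarrow> bool) \<Rightarrow> 'a list \<Rightarrow> bool" where
  "bgp_output V E s \<longleftrightarrow> bgp_run V E s \<and> burned V E s = V"

end

theory Submission
  imports Defs
begin

text \<open>Let \<open>b\<close> be the burning number and \<open>(t\<^sub>1,\<dots>,t\<^sub>b)\<close> an optimal burning sequence,
  so that \<open>V\<close> is covered by \<open>b\<close> balls of radius at most \<open>b - 1\<close>. The distances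
  \<open>d(s\<^sub>k\<^sub>+\<^sub>1, {s\<^sub>1,\<dots>,s\<^sub>k})\<close> chosen by BGP never increase. If \<open>r = d(s\<^sub>b\<^sub>+\<^sub>1, {s\<^sub>1,\<dots>,s\<^sub>b})\<close>
  exceeds \<open>2b - 2\<close>, then \<open>s\<^sub>1,\<dots>,s\<^sub>b\<^sub>+\<^sub>1\<close> are pairwise more than \<open>2b - 2\<close> apart, and two of
  these \<open>b + 1\<close> vertices would share one of the \<open>b\<close> balls. Hence \<open>r \<le> 2b - 2\<close>: every vertex
  is within \<open>2b - 2\<close> of \<open>{s\<^sub>1,\<dots>,s\<^sub>b}\<close>, so the first \<open>3b - 2\<close> chosen vertices already burn
  the graph and the loop stops by then.\<close>

lemma is_walk_singleton: "is_walk V E [x] \<longleftrightarrow> x \<in> V"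
  by (auto simp: is_walk_def)

lemma is_walk_Cons_Cons:
  "is_walk V E (x # y # p) \<longleftrightarrow> x \<in> V \<and> E x y \<and> is_walk V E (y # p)"
  unfolding is_walk_def by (auto simp: All_less_Suc2)

lemma is_walk_append:
  "is_walk V E p \<Longrightarrow> is_walk V E q \<Longrightarrow> last p = hd q \<Longrightarrow> is_walk V E (p @ tl q)"
proof (induction p rule: induct_list012)
  case 1
  then show ?case by (simp add: is_walk_def)
next
  case (2 x)
  then show ?case by (cases q) auto
next
  case (3 x y p)
  then show ?case by (simp add: is_walk_Cons_Cons)
qed

lemma is_walk_rev:
  assumes sym: "\<And>u v. E u v \<Longrightarrow> E v u" and p: "is_walk V E p"
  shows "is_walk V E (rev p)"
proof -
  have "E (rev p ! i) (rev p ! Suc i)" if "Suc i < length p" for i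
  proof -
    have "E (p ! (length p - Suc (Suc i))) (p ! Suc (length p - Suc (Suc i)))"
      using p that unfolding is_walk_def by auto
    then show ?thesis using sym that by (simp add: rev_nth Suc_diff_Suc)
  qed
  then show ?thesis using p unfolding is_walk_def by simp
qed

lemma dist_le_walk_length:
  "is_walk V E p \<Longrightarrow> hd p = u \<Longrightarrow> last p = v \<Longrightarrow> dist V E u v \<le> enat (length p - 1)"
  unfolding dist_def by (rule INF_lower) auto

lemma dist_enatE:
  assumes "dist V E u v = enat n"
  obtains p where "is_walk V E p" "hd p = u" "last p = v" "length p - 1 = n"
proof -
  let ?W = "{p. is_walk V E p \<and> hd p = u \<and> last p = v}"
  have "?W \<noteq> {}"
  proof
    assume "?W = {}"
    then have "dist V E u v = \<infinity>" unfolding dist_def by (metis INF_empty top_enat_def)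
    with assms show False by simp
  qed
  then obtain p where "p \<in> ?W" by blast
  then have "dist V E u v \<in> (\<lambda>p. enat (length p - 1)) ` ?W"
    unfolding dist_def by (rule wellorder_InfI[OF imageI])
  then show ?thesis using assms by (auto intro: that)
qed

lemma dist_self: "v \<in> V \<Longrightarrow> dist V E v v = 0"
  using dist_le_walk_length[of V E "[v]" v v] by (simp add: is_walk_singleton flip: zero_enat_def)

lemma dist_commute:
  assumes "simple_graph V E"
  shows "dist V E u v = dist V E v u"
proof -
  have le: "dist V E x y \<le> dist V E y x" for x y
  proof (cases "dist V E y x")
    case (enat n)
    then obtain p where p: "is_walk V E p" "hd p = y" "last p = x" "length p - 1 = n"
      by (rule dist_enatE)
    have "is_walk V E (rev p)"
      using is_walk_rev p(1) assms unfolding simple_graph_def by blast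
    moreover have "p \<noteq> []" using p(1) by (simp add: is_walk_def)
    ultimately show ?thesis
      using dist_le_walk_length[of V E "rev p" x y] p enat by (simp add: hd_rev last_rev)
  qed simp
  show ?thesis using le[of u v] le[of v u] by simp
qed

lemma dist_triangle: "dist V E u w \<le> dist V E u v + dist V E v w"
proof (cases "dist V E u v")
  case m: (enat m)
  show ?thesis
  proof (cases "dist V E v w")
    case n: (enat n)
    obtain p where p: "is_walk V E p" "hd p = u" "last p = v" "length p - 1 = m"
      using m by (rule dist_enatE)
    obtain q where q: "is_walk V E q" "hd q = v" "last q = w" "length q - 1 = n"
      using n by (rule dist_enatE)
    have "p \<noteq> []" "q \<noteq> []" using p q by (auto simp: is_walk_def)
    then have "hd (p @ tl q) = u" "last (p @ tl q) = w"
      using p(2,3) q(2,3) by (cases q; auto simp: last_append)+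
    moreover have "length (p @ tl q) - 1 = m + n"
      using p(4) q(4) \<open>p \<noteq> []\<close> \<open>q \<noteq> []\<close> by (cases p; cases q) auto
    ultimately show ?thesis
      using dist_le_walk_length[OF is_walk_append[OF p(1) q(1)]] p q m n by simp
  qed simp
qed simp

lemma dist_set_le_dist: "w \<in> S \<Longrightarrow> dist_set V E u S \<le> dist V E u w"
  unfolding dist_set_def by (rule INF_lower)

lemma dist_set_antimono: "S \<subseteq> T \<Longrightarrow> dist_set V E u T \<le> dist_set V E u S"
  unfolding dist_set_def by (rule INF_superset_mono) auto

lemma dist_set_attained:
  assumes "S \<noteq> {}"
  obtains w where "w \<in> S" "dist_set V E u S = dist V E u w"
proof -
  from assms obtain w where "w \<in> S" by blast
  then have "dist_set V E u S \<in> dist V E u ` S"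
    unfolding dist_set_def by (rule wellorder_InfI[OF imageI])
  then show ?thesis by (auto intro: that)
qed

lemma burned_subset: "burned V E s \<subseteq> V"
  unfolding burned_def nbhd_def by auto

lemma burning_seq_exists:
  assumes "simple_graph V E"
  shows "\<exists>s. burning_seq V E s"
proof -
  obtain xs where xs: "set xs = V"
    using assms finite_list unfolding simple_graph_def by metis
  have "v \<in> burned V E xs" if v: "v \<in> V" for v
  proof -
    obtain i where i: "i < length xs" "xs ! i = v"
      using v xs by (metis in_set_conv_nth)
    then have "dist V E v (xs ! i) \<le> enat (length xs - 1 - i)"
      using v by (simp add: dist_self)
    with v i show ?thesis
      unfolding burned_def nbhd_def by blast
  qed
  then have "burned V E xs = V"
    using burned_subset[of V E xs] by blast
  with xs show ?thesis
    unfolding burning_seq_def by auto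
qed

lemma burning_number_attained:
  assumes "simple_graph V E"
  obtains t where "burning_seq V E t" "length t = burning_number V E"
proof -
  obtain s where "burning_seq V E s" using burning_seq_exists[OF assms] ..
  then have "\<exists>k t. length t = k \<and> burning_seq V E t" by blast
  then have "\<exists>t. length t = burning_number V E \<and> burning_seq V E t"
    unfolding burning_number_def by (rule LeastI_ex)
  then show ?thesis using that by blast
qed

text \<open>Each of the first \<open>m\<close> vertices of \<open>s\<close> burns with radius at least \<open>length s - m\<close>.\<close>

lemma burned_eq_if_near_prefix:
  assumes near: "\<forall>u\<in>V. dist_set V E u (set (take m s)) \<le> enat (length s - m)"
  shows "burned V E s = V"
proof
  show "V \<subseteq> burned V E s"
  proof
    fix u assume u: "u \<in> V"
    have "set (take m s) \<noteq> {}"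
    proof
      assume "set (take m s) = {}"
      with near u show False by (simp add: dist_set_def top_enat_def)
    qed
    then obtain w where w: "w \<in> set (take m s)"
      and dw: "dist_set V E u (set (take m s)) = dist V E u w"
      by (rule dist_set_attained)
    then obtain i where i: "i < m" "i < length s" "s ! i = w"
      by (auto simp: in_set_conv_nth)
    have "dist V E u (s ! i) \<le> enat (length s - 1 - i)"
      using near u dw i order_trans by fastforce
    with u i show "u \<in> burned V E s"
      unfolding burned_def nbhd_def by blast
  qed
qed (rule burned_subset)

text \<open>Pigeonhole over the \<open>length t\<close> balls of \<open>t\<close>, each of radius at most \<open>length t - 1\<close>.\<close>

lemma burning_seq_close_pair:
  assumes G: "simple_graph V E" and t: "burning_seq V E t"
    and xs: "set xs \<subseteq> V" and len: "length t < length xs"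
  shows "\<exists>i j. i < j \<and> j < length xs \<and> dist V E (xs ! i) (xs ! j) \<le> enat (2 * (length t - 1))"
proof -
  have "\<exists>c<length t. dist V E (xs ! j) (t ! c) \<le> enat (length t - 1)" if j: "j < length xs" for j
  proof -
    have "xs ! j \<in> burned V E t"
      using t xs j unfolding burning_seq_def by auto
    then obtain c where "c < length t" "dist V E (xs ! j) (t ! c) \<le> enat (length t - 1 - c)"
      unfolding burned_def nbhd_def by blast
    then show ?thesis
      by (meson diff_le_self enat_ord_simps(1) order_trans)
  qed
  then obtain centre where centre: "\<And>j. j < length xs \<Longrightarrow>
      centre j < length t \<and> dist V E (xs ! j) (t ! centre j) \<le> enat (length t - 1)"
    by metis
  have "\<not> inj_on centre {..<length xs}"
  proof (rule pigeonhole)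
    have "centre ` {..<length xs} \<subseteq> {..<length t}"
      using centre by auto
    then have "card (centre ` {..<length xs}) \<le> length t"
      using card_mono[of "{..<length t}"] by fastforce
    then show "card (centre ` {..<length xs}) < card {..<length xs}"
      using len by simp
  qed
  then obtain i j where ij: "i < length xs" "j < length xs" "i \<noteq> j" "centre i = centre j"
    unfolding inj_on_def by blast
  let ?c = "t ! centre j"
  have "dist V E (xs ! i) (xs ! j) \<le> dist V E (xs ! i) ?c + dist V E ?c (xs ! j)"
    by (rule dist_triangle)
  also have "\<dots> = dist V E (xs ! i) ?c + dist V E (xs ! j) ?c"
    by (simp only: dist_commute[OF G, of ?c])
  also have "\<dots> \<le> enat (length t - 1) + enat (length t - 1)"
    using centre[of i] centre[of j] ij by (intro add_mono) auto
  also have "\<dots> = enat (2 * (length t - 1))"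
    by (simp add: mult_2)
  finally have close: "dist V E (xs ! i) (xs ! j) \<le> enat (2 * (length t - 1))" .
  show ?thesis
  proof (cases "i < j")
    case True
    with close ij show ?thesis by blast
  next
    case False
    with close ij dist_commute[OF G] show ?thesis
      by (metis linorder_neqE_nat)
  qed
qed

lemma bgp_run_greedy:
  "bgp_run V E s \<Longrightarrow> 1 \<le> j \<Longrightarrow> j < length s \<Longrightarrow> u \<in> V \<Longrightarrow>
    dist_set V E u (set (take j s)) \<le> dist_set V E (s ! j) (set (take j s))"
  unfolding bgp_run_def by blast

lemma bgp_run_prefix_not_burning:
  "bgp_run V E s \<Longrightarrow> 1 \<le> j \<Longrightarrow> j < length s \<Longrightarrow> burned V E (take j s) \<noteq> V"
  unfolding bgp_run_def by blast

lemma bgp_run_nth_in_vertices: "bgp_run V E s \<Longrightarrow> j < length s \<Longrightarrow> s ! j \<in> V"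
  unfolding bgp_run_def by (meson nth_mem subsetD)

text \<open>The greedy distances never increase, so they bound all earlier pairwise distances.\<close>

lemma bgp_run_dist_nth_ge:
  assumes run: "bgp_run V E s" and ij: "i < j" "j \<le> m" "m < length s"
  shows "dist_set V E (s ! m) (set (take m s)) \<le> dist V E (s ! j) (s ! i)"
proof -
  have "dist_set V E (s ! m) (set (take m s)) \<le> dist_set V E (s ! m) (set (take j s))"
    using ij by (simp add: dist_set_antimono set_take_subset_set_take)
  also have "\<dots> \<le> dist_set V E (s ! j) (set (take j s))"
    using ij by (intro bgp_run_greedy[OF run] bgp_run_nth_in_vertices[OF run]) auto
  also have "\<dots> \<le> dist V E (s ! j) (s ! i)"
  proof (rule dist_set_le_dist)
    show "s ! i \<in> set (take j s)"
      using ij by (auto simp: in_set_conv_nth intro: exI[of _ i])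
  qed
  finally show ?thesis .
qed

text \<open>Otherwise the first \<open>length t + 1\<close> greedy choices would be too far apart to fit
  into the balls of \<open>t\<close>.\<close>

lemma bgp_run_greedy_dist_le:
  assumes G: "simple_graph V E" and run: "bgp_run V E s"
    and t: "burning_seq V E t" and len: "length t < length s"
  shows "dist_set V E (s ! length t) (set (take (length t) s)) \<le> enat (2 * (length t - 1))"
    (is "?r \<le> _")
proof (rule ccontr)
  assume far: "\<not> ?r \<le> enat (2 * (length t - 1))"
  let ?xs = "take (Suc (length t)) s"
  have "set ?xs \<subseteq> V"
    using run unfolding bgp_run_def by (meson set_take_subset order_trans)
  moreover have "length t < length ?xs"
    using len by simp
  ultimately obtain i j where ij: "i < j" "j < length ?xs"
    and close: "dist V E (?xs ! i) (?xs ! j) \<le> enat (2 * (length t - 1))"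
    using burning_seq_close_pair[OF G t] by blast
  have "?r \<le> dist V E (s ! j) (s ! i)"
    using ij len by (intro bgp_run_dist_nth_ge[OF run]) auto
  also have "\<dots> \<le> enat (2 * (length t - 1))"
    using close ij dist_commute[OF G] by auto
  finally show False using far by contradiction
qed

lemma bgp_run_length_le:
  assumes G: "simple_graph V E" and ne: "V \<noteq> {}" and run: "bgp_run V E s"
  shows "length s \<le> 3 * burning_number V E - 2"
proof (rule ccontr)
  obtain t where t: "burning_seq V E t" "length t = burning_number V E"
    by (rule burning_number_attained[OF G])
  define b where "b = length t"
  have "t \<noteq> []"
    using t(1) ne unfolding burning_seq_def burned_def by auto
  then have b: "1 \<le> b" unfolding b_def by (cases t) auto
  assume "\<not> length s \<le> 3 * burning_number V E - 2"
  then have long: "3 * b - 2 < length s" unfolding b_def t(2) by simp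
  have r: "dist_set V E (s ! b) (set (take b s)) \<le> enat (2 * (b - 1))"
    unfolding b_def using b long by (intro bgp_run_greedy_dist_le[OF G run t(1)]) (simp add: b_def)
  have "burned V E (take (3 * b - 2) s) = V"
  proof (rule burned_eq_if_near_prefix[where m = b])
    have "dist_set V E u (set (take b s)) \<le> enat (2 * (b - 1))" if "u \<in> V" for u
      using bgp_run_greedy[OF run _ _ that] r b long order_trans by fastforce
    moreover have "take b (take (3 * b - 2) s) = take b s" "length (take (3 * b - 2) s) - b = 2 * (b - 1)"
      using b long by (auto simp: min_def)
    ultimately show "\<forall>u\<in>V. dist_set V E u (set (take b (take (3 * b - 2) s)))
        \<le> enat (length (take (3 * b - 2) s) - b)"
      by simp
  qed
  moreover have "burned V E (take (3 * b - 2) s) \<noteq> V"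
    using b long by (intro bgp_run_prefix_not_burning[OF run]) auto
  ultimately show False by contradiction
qed

lemma bgp_run_snoc:
  assumes G: "simple_graph V E" and run: "bgp_run V E s" and unburnt: "burned V E s \<noteq> V"
  obtains u where "bgp_run V E (s @ [u])"
proof -
  let ?d = "\<lambda>v. dist_set V E v (set s)"
  have "finite V" using G unfolding simple_graph_def by blast
  moreover have "V \<noteq> {}" using run unfolding bgp_run_def by (cases s) auto
  ultimately have "Max (?d ` V) \<in> ?d ` V" by (intro Max_in finite_imageI) auto
  then obtain u where u: "u \<in> V" "?d u = Max (?d ` V)" by (auto simp del: Max_in)
  have farthest: "\<forall>v\<in>V. ?d v \<le> ?d u" unfolding u(2) using \<open>finite V\<close> by simp
  have "burned V E (take j (s @ [u])) \<noteq> V \<and>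
      (\<forall>v\<in>V. dist_set V E v (set (take j (s @ [u])))
        \<le> dist_set V E ((s @ [u]) ! j) (set (take j (s @ [u]))))"
    if j: "1 \<le> j" "j < length (s @ [u])" for j
  proof (cases "j < length s")
    case True
    then show ?thesis using run j unfolding bgp_run_def by (simp add: nth_append)
  next
    case False
    then have "j = length s" using j by simp
    then show ?thesis using unburnt farthest by simp
  qed
  with run u(1) have "bgp_run V E (s @ [u])"
    unfolding bgp_run_def by simp
  then show ?thesis by (rule that)
qed

lemma bgp_output_exists:
  assumes G: "simple_graph V E" and ne: "V \<noteq> {}"
  shows "\<exists>s. bgp_output V E s"
proof -
  obtain v where "v \<in> V" using ne by blast
  then have "bgp_run V E [v]" unfolding bgp_run_def by simp
  then obtain s where run: "bgp_run V E s"
    and longest: "\<And>s'. bgp_run V E s' \<Longrightarrow> length s' \<le> length s"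
    using ex_has_greatest_nat[where f = length and b = "Suc (3 * burning_number V E - 2)"]
      bgp_run_length_le[OF G ne] by (metis less_Suc_eq_le)
  have "burned V E s = V"
  proof (rule ccontr)
    assume "burned V E s \<noteq> V"
    then obtain u where "bgp_run V E (s @ [u])" by (rule bgp_run_snoc[OF G run])
    then show False using longest by fastforce
  qed
  with run show ?thesis unfolding bgp_output_def by blast
qed

lemma bgp_output_burning_seq: "bgp_output V E s \<Longrightarrow> burning_seq V E s"
  unfolding bgp_output_def bgp_run_def burning_seq_def by blast

theorem theorem2:
  fixes V :: "'a set" and E :: "'a \<Rightarrow> 'a \<Rightarrow> bool"
  assumes "simple_graph V E" and "V \<noteq> {}"
  shows "(\<forall>s. bgp_run V E s \<longrightarrow> length s \<le> 3 * burning_number V E - 2)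
       \<and> (\<exists>s. bgp_output V E s)
       \<and> (\<forall>s. bgp_output V E s \<longrightarrow>
              burning_seq V E s \<and> length s \<le> 3 * burning_number V E - 2)"
  using bgp_run_length_le[OF assms] bgp_output_exists[OF assms] bgp_output_burning_seq
  unfolding bgp_output_def by blast

end
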